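(* Let $n\ge 1$ and let $\epsilon_n=e^{2\pi\sqrt{-1}/n}$. Define \[ \Psi_n(X_0,\dots,X_{n-1})=\prod_{i\in(\mathbb Z/n\mathbb Z)^\times}\Bigl(\sum_{j\in\mathbb Z/n\mathbb Z}\epsilon_n^{ij}X_j\Bigr). \] Let the symmetric group $S_n$, viewed as the permutation group of $\mathbb Z/n\mathbb Z=\{0,1,\dots,n-1\}$, act on $\mathbb C[X_0,\dots,X_{n-1}]$ by $\sigma(X_j)=X_{\sigma(j)}$, and let $\mathrm{Stab}(\Psi_n)=\{\sigma\in S_n:\sigma(\Psi_n)=\Psi_n\}$. Then $\mathrm{Stab}(\Psi_n)=\{\mathrm{id}\}$ if $n=1,2$, and $\mathrm{Stab}(\Psi_n)=G_n$ if $n>2$, where $G_n=\{\alpha_{a,b}: a\in(\mathbb Z/n\mathbb Z)^\times,\ b\in\mathbb Z/n\mathbb Z\}$ and $\alpha_{a,b}$ is the permutation $x\mapsto ax+b$ of $\mathbb Z/n\mathbb Z$.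
   Context: $G_n$ is the affine group $\mathrm{AGL}(1,\mathbb Z/n\mathbb Z)$ viewed as a subgroup of $S_n$. *)

theory Defs
  imports Complex_Main "HOL-Combinatorics.Permutations"
begin

text \<open>Polynomials in the variables X_0,...,X_{n-1} over the complex numbers are represented
  by their polynomial functions (nat => complex) => complex; since the complex numbers are an
  infinite field, two polynomials are equal iff their polynomial functions are equal.\<close>

definition eps :: "nat \<Rightarrow> complex" where
  "eps n = cis (2 * pi / real n)"

definition units_mod :: "nat \<Rightarrow> nat set" where
  "units_mod n = {i. i < n \<and> coprime i n}"

definition Psi :: "nat \<Rightarrow> (nat \<Rightarrow> complex) \<Rightarrow> complex" where
  "Psi n X = (\<Prod>i\<in>units_mod n. \<Sum>j<n. eps n ^ (i * j) * X j)"

definition perm_act :: "(nat \<Rightarrow> nat) \<Rightarrow> ((nat \<Rightarrow> complex) \<Rightarrow> complex) \<Rightarrow> ((nat \<Rightarrow> complex) \<Rightarrow> complex)" where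
  "perm_act \<sigma> P = (\<lambda>X. P (\<lambda>j. X (\<sigma> j)))"

definition Stab :: "nat \<Rightarrow> (nat \<Rightarrow> nat) set" where
  "Stab n = {\<sigma>. \<sigma> permutes {..<n} \<and> perm_act \<sigma> (Psi n) = Psi n}"

definition affine_perm :: "nat \<Rightarrow> nat \<Rightarrow> nat \<Rightarrow> nat \<Rightarrow> nat" where
  "affine_perm n a b = (\<lambda>x. if x < n then (a * x + b) mod n else x)"

definition G :: "nat \<Rightarrow> (nat \<Rightarrow> nat) set" where
  "G n = {affine_perm n a b | a b. a \<in> units_mod n \<and> b < n}"

end

theory Submission
  imports Defs "HOL-Number_Theory.Totient" "HOL-Library.Real_Mod"
begin

text \<open>
  If \<open>\<sigma>\<close> fixes \<open>Psi n\<close>, then \<open>Psi n\<close> vanishes on the hyperplane obtained by moving its factor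
  \<open>i = 1\<close> with \<open>\<sigma>\<close>. Over an infinite field a hyperplane covered by finitely many hyperplanes lies
  in one of them, so \<open>\<Sum>k. \<epsilon>^(\<sigma> k) X k\<close> is proportional to some factor \<open>\<Sum>k. \<epsilon>^(i k) X k\<close> with \<open>i\<close>
  a unit, and comparing coefficients gives \<open>\<sigma> x = i x + \<sigma> 0\<close>.
  Conversely, with \<open>a a' = 1\<close>, the map \<open>x \<mapsto> a x + b\<close> turns the \<open>i\<close>-th factor into \<open>\<epsilon>^(-i a' b)\<close>
  times the \<open>(i a')\<close>-th one, and the product of these scalars is \<open>1\<close> because for \<open>n > 2\<close> the
  units sum to a multiple of \<open>n\<close> (pair \<open>u\<close> with \<open>n - u\<close>).
  For \<open>n = 2\<close> the swap is the only candidate besides the identity, and it negates \<open>X 0 - X 1\<close>.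
\<close>

lemma eps_power_eq_iff:
  assumes "n > 0"
  shows "eps n ^ a = eps n ^ b \<longleftrightarrow> [a = b] (mod n)"
proof -
  have "eps n ^ a = eps n ^ b \<longleftrightarrow> cis (real a * (2 * pi / n)) / cis (real b * (2 * pi / n)) = 1"
    by (simp add: eps_def DeMoivre)
  also have "\<dots> \<longleftrightarrow> (\<exists>m::int. (real a - real b) * (2 * pi / n) = of_int m * (2 * pi))"
    by (simp add: cis_divide cis_eq_1_iff left_diff_distrib diff_divide_distrib)
  also have "\<dots> \<longleftrightarrow> (\<exists>m::int. of_int (int a - int b) = (of_int (int n * m) :: real))"
  proof -
    have "(real a - real b) * (2 * pi / n) = of_int m * (2 * pi) \<longleftrightarrow> real a - real b = of_int m * n"
      for m :: int
      using assms by (simp add: divide_simps)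
    then show ?thesis by (simp add: mult.commute)
  qed
  also have "\<dots> \<longleftrightarrow> int n dvd int a - int b"
    unfolding of_int_eq_iff dvd_def ..
  also have "\<dots> \<longleftrightarrow> [a = b] (mod n)"
    by (simp add: cong_iff_dvd_diff flip: cong_int_iff)
  finally show ?thesis .
qed

definition linform :: "nat \<Rightarrow> (nat \<Rightarrow> 'a::comm_semiring_0) \<Rightarrow> (nat \<Rightarrow> 'a) \<Rightarrow> 'a" where
  "linform n c X = (\<Sum>k<n. c k * X k)"

lemma linform_add_scaled: "linform n c (\<lambda>j. X j + s * Y j) = linform n c X + s * linform n c Y"
  unfolding linform_def by (simp add: sum.distrib sum_distrib_left algebra_simps)

lemma linform_permute:
  assumes "\<sigma> permutes {..<n}"
  shows "linform n (\<lambda>k. c (\<sigma> k)) X = linform n c (\<lambda>j. X (inv \<sigma> j))"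
  unfolding linform_def using permutes_inverses(2)[OF assms]
  by (simp add: sum.permute[OF assms, of "\<lambda>j. c j * X (inv \<sigma> j)"])

lemma linform_kernel_subset_imp_proportional:
  fixes f g :: "nat \<Rightarrow> 'a::comm_ring"
  assumes "k < n" and kernel: "\<And>X. linform n g X = 0 \<Longrightarrow> linform n f X = 0"
  shows "f k * g 0 = f 0 * g k"
proof (cases "k = 0")
  case False
  define X where "X = (\<lambda>j. if j = k then g 0 else if j = 0 then - g k else 0)"
  have X: "linform n c X = c k * g 0 - c 0 * g k" for c
  proof -
    have "linform n c X = (\<Sum>j\<in>{k, 0}. c j * X j)"
      unfolding linform_def using \<open>k < n\<close> by (intro sum.mono_neutral_right) (auto simp: X_def)
    then show ?thesis using False by (simp add: X_def)
  qed
  have "linform n f X = 0" by (rule kernel) (simp add: X mult.commute)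
  then show ?thesis by (simp add: X)
qed simp

lemma linform_ex_kernel_point_avoiding:
  fixes g :: "nat \<Rightarrow> 'a::field_char_0"
  assumes "finite I" and "\<And>i. i \<in> I \<Longrightarrow> \<exists>Y. linform n g Y = 0 \<and> linform n (f i) Y \<noteq> 0"
  shows "\<exists>X. linform n g X = 0 \<and> (\<forall>i\<in>I. linform n (f i) X \<noteq> 0)"
  using assms
proof (induction I rule: finite_induct)
  case empty
  show ?case by (rule exI[of _ "\<lambda>_. 0"]) (simp add: linform_def)
next
  case (insert a I)
  obtain X where X: "linform n g X = 0" "\<forall>i\<in>I. linform n (f i) X \<noteq> 0"
    using insert by auto
  obtain Y where Y: "linform n g Y = 0" "linform n (f a) Y \<noteq> 0"
    using insert.prems by auto
  show ?case
  proof (cases "linform n (f a) X = 0")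
    case False
    then show ?thesis using X by auto
  next
    case True
    \<comment> \<open>Perturb \<open>X\<close> along \<open>Y\<close>, avoiding the finitely many step sizes that kill some form.\<close>
    let ?bad = "insert 0 ((\<lambda>i. - linform n (f i) X / linform n (f i) Y) ` I)"
    have "finite ?bad" using insert.hyps(1) by simp
    then obtain s where s: "s \<notin> ?bad"
      using ex_new_if_finite[OF infinite_UNIV_char_0] by blast
    define Z where "Z = (\<lambda>j. X j + s * Y j)"
    have "linform n (f i) Z \<noteq> 0" if "i \<in> insert a I" for i
    proof (cases "i = a \<or> linform n (f i) Y = 0")
      case True
      then show ?thesis using that X Y s \<open>linform n (f a) X = 0\<close>
        unfolding Z_def linform_add_scaled by auto
    next
      case False
      then have Yi: "linform n (f i) Y \<noteq> 0" by simp
      show ?thesis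
      proof
        assume "linform n (f i) Z = 0"
        then have "s = - linform n (f i) X / linform n (f i) Y"
          using Yi unfolding Z_def linform_add_scaled by (simp add: field_simps add_eq_0_iff)
        then show False using that s False by auto
      qed
    qed
    moreover have "linform n g Z = 0"
      unfolding Z_def linform_add_scaled using X Y by simp
    ultimately show ?thesis by blast
  qed
qed

lemma linform_kernel_covered_imp_subset:
  fixes g :: "nat \<Rightarrow> 'a::field_char_0"
  assumes "finite I" and "\<And>X. linform n g X = 0 \<Longrightarrow> \<exists>i\<in>I. linform n (f i) X = 0"
  shows "\<exists>i\<in>I. \<forall>X. linform n g X = 0 \<longrightarrow> linform n (f i) X = 0"
  using linform_ex_kernel_point_avoiding[OF assms(1), of n g f] assms(2) by blast

abbreviation dft_coeff :: "nat \<Rightarrow> nat \<Rightarrow> (nat \<Rightarrow> complex) \<Rightarrow> complex" where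
  "dft_coeff n i \<equiv> linform n (\<lambda>k. eps n ^ (i * k))"

lemma Psi_eq_prod_dft_coeff: "Psi n X = (\<Prod>i\<in>units_mod n. dft_coeff n i X)"
  unfolding Psi_def linform_def ..

lemma Psi_eq_0_iff: "Psi n X = 0 \<longleftrightarrow> (\<exists>i\<in>units_mod n. dft_coeff n i X = 0)"
  unfolding Psi_eq_prod_dft_coeff by (simp add: units_mod_def)

lemma Stab_iff:
  "\<sigma> \<in> Stab n \<longleftrightarrow> \<sigma> permutes {..<n} \<and> (\<forall>X. Psi n (\<lambda>j. X (\<sigma> j)) = Psi n X)"
  unfolding Stab_def perm_act_def by (auto simp: fun_eq_iff)

lemma affine_perm_if_kernel_subset:
  assumes "n > 0" and \<sigma>: "\<sigma> permutes {..<n}"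
    and kernel: "\<And>X. linform n (\<lambda>k. eps n ^ \<sigma> k) X = 0 \<Longrightarrow> dft_coeff n i X = 0"
  shows "\<sigma> = affine_perm n i (\<sigma> 0)"
proof
  fix x
  show "\<sigma> x = affine_perm n i (\<sigma> 0) x"
  proof (cases "x < n")
    case True
    have "eps n ^ (i * x) * eps n ^ \<sigma> 0 = eps n ^ (i * 0) * eps n ^ \<sigma> x"
      using linform_kernel_subset_imp_proportional[OF True kernel] .
    then have "[i * x + \<sigma> 0 = \<sigma> x] (mod n)"
      using \<open>n > 0\<close> by (simp add: eps_power_eq_iff flip: power_add)
    moreover have "\<sigma> x < n" using permutes_in_image[OF \<sigma>] True by simp
    ultimately show ?thesis using True by (simp add: affine_perm_def cong_def)
  next
    case False
    then show ?thesis using permutes_not_in[OF \<sigma>] by (simp add: affine_perm_def)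
  qed
qed

lemma Stab_subset_G:
  assumes "n \<ge> 2"
  shows "Stab n \<subseteq> G n"
proof
  fix \<sigma> assume "\<sigma> \<in> Stab n"
  then have \<sigma>: "\<sigma> permutes {..<n}" and invariant: "\<And>X. Psi n (\<lambda>j. X (\<sigma> j)) = Psi n X"
    by (auto simp: Stab_iff)
  have "\<exists>i\<in>units_mod n. dft_coeff n i X = 0" if "linform n (\<lambda>k. eps n ^ \<sigma> k) X = 0" for X
  proof -
    have "dft_coeff n 1 (\<lambda>j. X (inv \<sigma> j)) = 0"
      using that linform_permute[OF \<sigma>, of "\<lambda>k. eps n ^ k"] by simp
    moreover have "1 \<in> units_mod n" using assms by (simp add: units_mod_def)
    ultimately have "Psi n (\<lambda>j. X (inv \<sigma> j)) = 0" unfolding Psi_eq_0_iff by blast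
    then have "Psi n X = 0"
      using invariant[of "\<lambda>j. X (inv \<sigma> j)"] permutes_inverses(2)[OF \<sigma>] by simp
    then show ?thesis by (simp add: Psi_eq_0_iff)
  qed
  moreover have "finite (units_mod n)" by (simp add: units_mod_def)
  ultimately obtain i where "i \<in> units_mod n"
    and "\<And>X. linform n (\<lambda>k. eps n ^ \<sigma> k) X = 0 \<Longrightarrow> dft_coeff n i X = 0"
    using linform_kernel_covered_imp_subset[where f = "\<lambda>i k. eps n ^ (i * k)"] by blast
  then have "\<sigma> = affine_perm n i (\<sigma> 0)"
    using affine_perm_if_kernel_subset[OF _ \<sigma>] assms by simp
  moreover have "\<sigma> 0 < n" using permutes_in_image[OF \<sigma>] assms by simp
  ultimately show "\<sigma> \<in> G n" using \<open>i \<in> units_mod n\<close> unfolding G_def by blast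
qed

lemma units_mod_eq_totatives:
  assumes "n > 1"
  shows "units_mod n = totatives n"
proof -
  have "x \<in> units_mod n \<longleftrightarrow> x \<in> totatives n" for x
    using assms by (cases "x = 0"; cases "x = n") (auto simp: units_mod_def in_totatives_iff)
  then show ?thesis by blast
qed

lemma sum_units_mod_dvd:
  assumes "n > 2"
  shows "n dvd (\<Sum>i\<in>units_mod n. i)"
proof -
  let ?U = "units_mod n"
  have reflect: "n - i \<in> ?U" if "i \<in> ?U" for i
  proof -
    have "i > 0" using that assms by (auto simp: units_mod_def intro: Nat.gr0I)
    moreover have "coprime (n - i) n"
      using that gcd_diff2_nat[of i n] by (simp add: units_mod_def coprime_iff_gcd_eq_1)
    ultimately show ?thesis using that by (simp add: units_mod_def)
  qed
  have "(\<Sum>i\<in>?U. n - i) = (\<Sum>i\<in>?U. i)" (is "?reflected = ?sum")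
    by (rule sum.reindex_bij_witness[of _ "\<lambda>i. n - i" "\<lambda>i. n - i"])
       (simp_all add: reflect, auto simp: units_mod_def)
  moreover have "?reflected + ?sum = n * card ?U"
    by (simp add: units_mod_def flip: sum.distrib)
  ultimately have "2 * ?sum = n * card ?U" by simp
  moreover obtain m where "card ?U = 2 * m"
    using totient_even[OF assms] assms by (auto simp: totient_def units_mod_eq_totatives elim: evenE)
  ultimately have "?sum = n * m" by simp
  then show ?thesis by simp
qed

lemma affine_perm_permutes:
  assumes "n > 0" and "coprime a n"
  shows "affine_perm n a b permutes {..<n}"
proof (rule bij_imp_permutes)
  have "inj_on (affine_perm n a b) {..<n}"
  proof (rule inj_onI)
    fix x y assume "x \<in> {..<n}" "y \<in> {..<n}" "affine_perm n a b x = affine_perm n a b y"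
    then have "[a * x + b = a * y + b] (mod n)" and "x < n" "y < n"
      by (simp_all add: affine_perm_def cong_def)
    then show "x = y"
      using \<open>coprime a n\<close> by (simp add: cong_add_rcancel_nat cong_mult_lcancel_nat cong_less_modulus_unique_nat)
  qed
  moreover have "affine_perm n a b ` {..<n} \<subseteq> {..<n}"
    using assms by (auto simp: affine_perm_def)
  ultimately show "bij_betw (affine_perm n a b) {..<n} {..<n}"
    by (simp add: bij_betw_def endo_inj_surj)
qed (simp add: affine_perm_def)

lemma units_mod_mult_bij:
  assumes "coprime c n"
  shows "bij_betw (\<lambda>i. i * c mod n) (units_mod n) (units_mod n)"
proof -
  have "inj_on (\<lambda>i. i * c mod n) (units_mod n)"
  proof (rule inj_onI)
    fix x y assume "x \<in> units_mod n" "y \<in> units_mod n" "x * c mod n = y * c mod n"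
    then show "x = y"
      using assms by (simp add: units_mod_def flip: cong_def)
        (metis cong_mult_rcancel_nat cong_less_modulus_unique_nat)
  qed
  moreover have "(\<lambda>i. i * c mod n) ` units_mod n \<subseteq> units_mod n"
    using assms by (auto simp: units_mod_def)
  ultimately show ?thesis
    by (simp add: bij_betw_def endo_inj_surj units_mod_def)
qed

lemma dft_coeff_compose_affine_perm:
  assumes "n > 0" and inverse: "[a * a' = 1] (mod n)"
  shows "eps n ^ (i * a' * b) * dft_coeff n i (\<lambda>j. X (affine_perm n a b j))
       = dft_coeff n (i * a' mod n) X"
proof -
  have "coprime a n"
    using cong_imp_coprime[OF cong_sym[OF inverse]] by simp
  note \<alpha> = affine_perm_permutes[OF \<open>n > 0\<close> this, of b]
  have exponent: "[i * a' mod n * affine_perm n a b j = i * a' * b + i * j] (mod n)" if "j < n" for j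
  proof -
    have "[i * a' mod n * affine_perm n a b j = i * a' * (a * j + b)] (mod n)"
      using that by (simp add: affine_perm_def cong_def mod_mult_left_eq mod_mult_right_eq)
    also have "i * a' * (a * j + b) = i * a' * b + i * j * (a * a')"
      by (simp add: algebra_simps)
    also have "[\<dots> = i * a' * b + i * j * 1] (mod n)"
      by (intro cong_add cong_mult inverse cong_refl)
    finally show ?thesis by simp
  qed
  have "dft_coeff n (i * a' mod n) X
      = (\<Sum>j<n. eps n ^ (i * a' mod n * affine_perm n a b j) * X (affine_perm n a b j))"
    unfolding linform_def by (subst sum.permute[OF \<alpha>]) simp
  also have "\<dots> = (\<Sum>j<n. eps n ^ (i * a' * b) * (eps n ^ (i * j) * X (affine_perm n a b j)))"
    using exponent \<open>n > 0\<close> by (intro sum.cong refl) (simp add: eps_power_eq_iff flip: power_add)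
  finally show ?thesis by (simp add: linform_def sum_distrib_left)
qed

lemma affine_perm_in_Stab:
  assumes "n > 2" and "a \<in> units_mod n"
  shows "affine_perm n a b \<in> Stab n"
proof -
  let ?U = "units_mod n" and ?\<alpha> = "affine_perm n a b"
  have "coprime a n" using assms by (simp add: units_mod_def)
  then obtain a' where inverse: "[a * a' = 1] (mod n)"
    using cong_solve_coprime_nat by auto
  have "coprime a' n"
    using cong_imp_coprime[OF cong_sym[OF inverse]] by simp
  have scalars: "(\<Prod>i\<in>?U. eps n ^ (i * a' * b)) = 1"
  proof -
    have "(\<Prod>i\<in>?U. eps n ^ (i * a' * b)) = eps n ^ ((\<Sum>i\<in>?U. i) * (a' * b))"
      by (simp add: power_sum sum_distrib_right mult.assoc)
    also have "\<dots> = eps n ^ 0"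
      using sum_units_mod_dvd[OF assms(1)] assms(1) by (subst eps_power_eq_iff) (simp_all add: cong_0_iff)
    finally show ?thesis by simp
  qed
  have "Psi n (\<lambda>j. X (?\<alpha> j)) = Psi n X" for X
  proof -
    have "Psi n (\<lambda>j. X (?\<alpha> j)) = (\<Prod>i\<in>?U. eps n ^ (i * a' * b)) * Psi n (\<lambda>j. X (?\<alpha> j))"
      by (simp add: scalars)
    also have "\<dots> = (\<Prod>i\<in>?U. dft_coeff n (i * a' mod n) X)"
      using assms(1) by (simp add: Psi_eq_prod_dft_coeff dft_coeff_compose_affine_perm[OF _ inverse]
          flip: prod.distrib)
    also have "\<dots> = Psi n X"
      unfolding Psi_eq_prod_dft_coeff
      by (rule prod.reindex_bij_betw[OF units_mod_mult_bij[OF \<open>coprime a' n\<close>]])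
    finally show ?thesis .
  qed
  then show ?thesis
    using affine_perm_permutes[OF _ \<open>coprime a n\<close>] assms(1) by (simp add: Stab_iff)
qed

lemma Stab_1: "Stab 1 = {id}"
  by (auto simp: Stab_def perm_act_def lessThan_Suc)

lemma Stab_2: "Stab 2 = {id}"
proof -
  have units: "units_mod 2 = {1}"
    by (auto simp: units_mod_def less_2_cases_iff)
  have Psi_2: "Psi 2 X = X 0 - X 1" for X
    unfolding Psi_def units by (simp add: eps_def numeral_2_eq_2)
  have "\<sigma> = id" if "\<sigma> \<in> Stab 2" for \<sigma>
  proof -
    obtain b where "b < 2" and \<sigma>: "\<sigma> = affine_perm 2 1 b"
      using Stab_subset_G[of 2] \<open>\<sigma> \<in> Stab 2\<close> by (auto simp: G_def units)
    \<comment> \<open>The translation by 1 swaps \<open>X\<^sub>0\<close> and \<open>X\<^sub>1\<close> and so negates \<open>Psi 2\<close>.\<close>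
    have "b \<noteq> 1"
    proof
      assume "b = 1"
      have "Psi 2 (\<lambda>j. X (\<sigma> j)) = Psi 2 X" for X
        using \<open>\<sigma> \<in> Stab 2\<close> by (simp add: Stab_iff)
      from this[of "\<lambda>j. if j = 0 then 1 else 0"] show False
        by (simp add: Psi_2 \<sigma> \<open>b = 1\<close> affine_perm_def)
    qed
    then show ?thesis
      using \<open>b < 2\<close> by (auto simp: \<sigma> affine_perm_def fun_eq_iff)
  qed
  moreover have "id \<in> Stab 2" by (simp add: Stab_def perm_act_def)
  ultimately show ?thesis by blast
qed

theorem lemma2p1:
  fixes n :: nat
  assumes "n \<ge> 1"
  shows "Stab n = (if n \<le> 2 then {id} else G n)"
proof -
  consider "n = 1" | "n = 2" | "n > 2" using assms by linarith
  then show ?thesis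
  proof cases
    case 3
    then have "Stab n = G n"
      using Stab_subset_G[of n] affine_perm_in_Stab[of n] by (auto simp: G_def)
    with 3 show ?thesis by simp
  qed (use Stab_1 Stab_2 in simp_all)
qed

end
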